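(* Consider SEMO on \textsc{LOTZ} with the Highest Diversity Contribution (HDC) parent selection, using as diversity measure either the crowding distance contribution or the hypervolume contribution with reference point $(-r,-r)$ for some $r\ge 1$. Then the expected time for finding the whole Pareto front is $O(n^2)$.
   Context: Search space $\{0,1\}^n$; objectives maximised. $\textsc{LOTZ}(x)=(\mathrm{LO}(x),\mathrm{TZ}(x))$, $\mathrm{LO}$ = number of leading ones, $\mathrm{TZ}$ = number of trailing zeros. Dominance: $y$ dominates $x$ if $f_i(y)\ge f_i(x)$ for all $i$, strictly for some $i$; weakly dominates if $\ge$ in all. Pareto set $X^*=\{1^i0^{n-i}:0\le i\le n\}$, front $F^*=f(X^* )$. SEMO with diversity-based parent selection: start with uniform random $s$, $P=\{s\}$. Each iteration: compute the diversity score of each $x\in P$ w.r.t. $P$; choose a parent by the selection mechanism; create $s'$ by flipping one uniformly random bit; if $s'$ is not dominated by any member of $P$, add it and remove all members weakly dominated by $s'$. Time = number of iterations until $f(P)=F^*$. HDC: always select an individual with the highest diversity score, ties broken uniformly at random. HVC with reference point $(r_1,r_2)$: sort population by increasing $f_1$ as $x_1,\dots,x_\mu$, set $f_1(x_0)=r_1$, $f_2(x_{\mu+1})=r_2$, $\mathrm{HVC}(x_i,P)=(f_1(x_i)-f_1(x_{i-1}))(f_2(x_i)-f_2(x_{i+1}))$. CDC: each point starts at 0; for each objective $m$, sort ascending by $f_m$, boundary points get $\infty$, intermediate $P[i]$ gets $+(f_m(P[i+1])-f_m(P[i-1]))/(f_m^{\max}-f_m^{\min})$, with $f_m^{\max},f_m^{\min}$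 the max and min values of objective $m$. *)

theory Defs
  imports "HOL-Probability.Probability" "HOL-Library.List_Lexorder"
begin

type_synonym bits = "bool list"
type_synonym popn = "bool list set"

definition LO :: "bits \<Rightarrow> nat" where
  "LO x = length (takeWhile (\<lambda>b. b) x)"

definition TZ :: "bits \<Rightarrow> nat" where
  "TZ x = length (takeWhile Not (rev x))"

definition f1 :: "bits \<Rightarrow> real" where "f1 x = real (LO x)"
definition f2 :: "bits \<Rightarrow> real" where "f2 x = real (TZ x)"

definition LOTZ :: "bits \<Rightarrow> real \<times> real" where
  "LOTZ x = (f1 x, f2 x)"

definition weakly_dominates :: "bits \<Rightarrow> bits \<Rightarrow> bool" where
  "weakly_dominates y x \<longleftrightarrow> f1 y \<ge> f1 x \<and> f2 y \<ge> f2 x"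

definition dominates :: "bits \<Rightarrow> bits \<Rightarrow> bool" where
  "dominates y x \<longleftrightarrow> weakly_dominates y x \<and> (f1 y > f1 x \<or> f2 y > f2 x)"

definition pareto_set :: "nat \<Rightarrow> bits set" where
  "pareto_set n = {replicate i True @ replicate (n - i) False | i. i \<le> n}"

definition pareto_front :: "nat \<Rightarrow> (real \<times> real) set" where
  "pareto_front n = LOTZ ` pareto_set n"

definition front_found :: "nat \<Rightarrow> popn \<Rightarrow> bool" where
  "front_found n P \<longleftrightarrow> LOTZ ` P = pareto_front n"

definition pos :: "'a list \<Rightarrow> 'a \<Rightarrow> nat" where
  "pos xs x = (LEAST i. i < length xs \<and> xs ! i = x)"

definition sorted_by :: "(bits \<Rightarrow> real) \<Rightarrow> popn \<Rightarrow> bits list" where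
  "sorted_by g P = sort_key g (sorted_list_of_set P)"

definition HVC :: "real \<Rightarrow> real \<Rightarrow> popn \<Rightarrow> bits \<Rightarrow> ereal" where
  "HVC r1 r2 P x =
     (let xs = sorted_by f1 P; i = pos xs x; k = length xs;
          prev1 = (if i = 0 then r1 else f1 (xs ! (i - 1)));
          next2 = (if i + 1 = k then r2 else f2 (xs ! (i + 1)))
      in ereal ((f1 x - prev1) * (f2 x - next2)))"

definition CD_obj :: "(bits \<Rightarrow> real) \<Rightarrow> popn \<Rightarrow> bits \<Rightarrow> ereal" where
  "CD_obj g P x =
     (let xs = sorted_by g P; i = pos xs x; k = length xs
      in if i = 0 \<or> i + 1 = k then \<infinity>
         else ereal ((g (xs ! (i + 1)) - g (xs ! (i - 1))) / (Max (g ` P) - Min (g ` P))))"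

definition CDC :: "popn \<Rightarrow> bits \<Rightarrow> ereal" where
  "CDC P x = CD_obj f1 P x + CD_obj f2 P x"

definition init_pop :: "nat \<Rightarrow> popn pmf" where
  "init_pop n = map_pmf (\<lambda>s. {s}) (pmf_of_set {x. length x = n})"

definition flip :: "bits \<Rightarrow> nat \<Rightarrow> bits" where
  "flip x i = x[i := \<not> x ! i]"

definition mutate :: "nat \<Rightarrow> bits \<Rightarrow> bits pmf" where
  "mutate n x = map_pmf (flip x) (pmf_of_set {..<n})"

definition hdc_select :: "(popn \<Rightarrow> bits \<Rightarrow> ereal) \<Rightarrow> popn \<Rightarrow> bits pmf" where
  "hdc_select d P = pmf_of_set {x \<in> P. \<forall>y \<in> P. d P y \<le> d P x}"

definition update :: "popn \<Rightarrow> bits \<Rightarrow> popn" where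
  "update P s' =
     (if \<exists>y \<in> P. dominates y s' then P
      else insert s' (P - {y \<in> P. weakly_dominates s' y}))"

definition semo_step :: "(popn \<Rightarrow> bits \<Rightarrow> ereal) \<Rightarrow> nat \<Rightarrow> popn \<Rightarrow> popn pmf" where
  "semo_step d n P = do { x \<leftarrow> hdc_select d P; s' \<leftarrow> mutate n x; return_pmf (update P s') }"

fun semo_dist :: "(popn \<Rightarrow> bits \<Rightarrow> ereal) \<Rightarrow> nat \<Rightarrow> nat \<Rightarrow> popn pmf" where
  "semo_dist d n 0 = init_pop n"
| "semo_dist d n (Suc t) =
     semo_dist d n t \<bind> (\<lambda>P. if front_found n P then return_pmf P else semo_step d n P)"

(* expected number of iterations T until f(P) = F*:  E[T] = sum_{t>=0} Pr[T > t] *)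
definition semo_expected_time :: "(popn \<Rightarrow> bits \<Rightarrow> ereal) \<Rightarrow> nat \<Rightarrow> ennreal" where
  "semo_expected_time d n =
     (\<Sum>t. ennreal (measure_pmf.prob (semo_dist d n t) {P. \<not> front_found n P}))"

end

theory Submission
  imports Defs
begin

(* Starting from a single bit string, the population of SEMO is always either one string x
   with LO x + TZ x < n, or a contiguous segment {1^i 0^(n-i) | a <= i <= b} of the Pareto set.
   The potential max (LO + TZ) + |P| never decreases and stays below 2n + 1 until the front
   is found. For a single string, flipping its first zero increases LO + TZ. For a segment,
   both diversity measures score the two ends of the segment highest, and at least one of
   them can be extended outwards by a single bit flip. So HDC picks among at most two parents
   and the potential grows with probability at least 1/(2n) in every step; the fitness-level
   method then bounds the expected time by 2n (2n + 1). *)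

section \<open>Additive drift and fitness levels\<close>

lemma additive_drift_hitting_time:
  fixes X :: "nat \<Rightarrow> 'a pmf" and K :: "'a \<Rightarrow> 'a pmf" and g :: "'a \<Rightarrow> nat"
  assumes X_Suc: "\<And>t. X (Suc t) = X t \<bind> (\<lambda>s. if T s then return_pmf s else K s)"
    and init: "\<And>s. s \<in> set_pmf (X 0) \<Longrightarrow> Q s"
    and invariant: "\<And>s s'. Q s \<Longrightarrow> \<not> T s \<Longrightarrow> s' \<in> set_pmf (K s) \<Longrightarrow> Q s'"
    and drift: "\<And>s. Q s \<Longrightarrow> \<not> T s \<Longrightarrow>
      (\<integral>\<^sup>+s'. of_nat (g s') \<partial>K s) + 1 \<le> of_nat (g s)"
    and bounded: "\<And>s. Q s \<Longrightarrow> g s \<le> B"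
  shows "(\<Sum>t. ennreal (measure_pmf.prob (X t) {s. \<not> T s})) \<le> of_nat B"
proof -
  let ?G = "\<lambda>t. \<integral>\<^sup>+s. of_nat (g s) \<partial>X t"
  let ?p = "\<lambda>t. ennreal (measure_pmf.prob (X t) {s. \<not> T s})"
  have reachable: "\<forall>s \<in> set_pmf (X t). Q s" for t
    by (induction t) (auto simp: X_Suc init invariant split: if_splits)
  have step: "?p t + ?G (Suc t) \<le> ?G t" for t
  proof -
    have "?p t + ?G (Suc t) = (\<integral>\<^sup>+s. indicator {s. \<not> T s} s +
        (\<integral>\<^sup>+s'. of_nat (g s') \<partial>(if T s then return_pmf s else K s)) \<partial>X t)"
      by (simp add: X_Suc nn_integral_add measure_pmf.emeasure_eq_measure[symmetric])
    also have "\<dots> \<le> ?G t"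
      using reachable[of t] drift
      by (intro nn_integral_mono_AE) (auto simp: AE_measure_pmf_iff add.commute)
    finally show ?thesis .
  qed
  have partial_sums: "(\<Sum>s<t. ?p s) + ?G t \<le> ?G 0" for t
  proof (induction t)
    case (Suc t)
    have "(\<Sum>s<Suc t. ?p s) + ?G (Suc t) = (\<Sum>s<t. ?p s) + (?p t + ?G (Suc t))"
      by (simp add: add.assoc)
    also have "\<dots> \<le> (\<Sum>s<t. ?p s) + ?G t"
      using step by (rule add_left_mono)
    also have "\<dots> \<le> ?G 0"
      by (rule Suc.IH)
    finally show ?case .
  qed simp
  have "?G 0 \<le> (\<integral>\<^sup>+s. of_nat B \<partial>X 0)"
    using reachable[of 0] bounded by (intro nn_integral_mono_AE) (auto simp: AE_measure_pmf_iff)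
  then have "?G 0 \<le> of_nat B"
    by (simp add: measure_pmf.emeasure_space_1)
  with partial_sums have "(\<Sum>s<t. ?p s) \<le> of_nat B" for t
    by (meson add_increasing2 order.trans zero_le le_iff_add)
  then show ?thesis
    by (simp add: suminf_eq_SUP SUP_least)
qed

lemma fitness_level_hitting_time:
  fixes X :: "nat \<Rightarrow> 'a pmf" and K :: "'a \<Rightarrow> 'a pmf" and level :: "'a \<Rightarrow> nat"
  assumes X_Suc: "\<And>t. X (Suc t) = X t \<bind> (\<lambda>s. if T s then return_pmf s else K s)"
    and init: "\<And>s. s \<in> set_pmf (X 0) \<Longrightarrow> Q s"
    and invariant: "\<And>s s'. Q s \<Longrightarrow> \<not> T s \<Longrightarrow> s' \<in> set_pmf (K s) \<Longrightarrow>
      Q s' \<and> level s \<le> level s'"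
    and progress: "\<And>s. Q s \<Longrightarrow> \<not> T s \<Longrightarrow>
      1 \<le> real c * measure_pmf.prob (K s) {s'. level s < level s'}"
    and below: "\<And>s. Q s \<Longrightarrow> \<not> T s \<Longrightarrow> level s < m"
  shows "(\<Sum>t. ennreal (measure_pmf.prob (X t) {s. \<not> T s})) \<le> of_nat (c * m)"
proof (rule additive_drift_hitting_time[where g = "\<lambda>s. c * (m - level s)"])
  fix s assume Q: "Q s" and nT: "\<not> T s"
  let ?up = "{s'. level s < level s'}"
  have "1 \<le> ennreal (real c * measure_pmf.prob (K s) ?up)"
    using progress[OF Q nT] by (simp add: ennreal_leI)
  then have "(\<integral>\<^sup>+s'. of_nat (c * (m - level s')) \<partial>K s) + 1 \<le>
      (\<integral>\<^sup>+s'. of_nat (c * (m - level s')) \<partial>K s) +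
      (\<integral>\<^sup>+s'. of_nat c * indicator ?up s' \<partial>K s)"
    by (simp add: nn_integral_cmult_indicator measure_pmf.emeasure_eq_measure ennreal_mult
        ennreal_of_nat_eq_real_of_nat)
  also have "\<dots> =
      (\<integral>\<^sup>+s'. of_nat (c * (m - level s')) + of_nat c * indicator ?up s' \<partial>K s)"
    by (rule nn_integral_add[symmetric]) auto
  also have "\<dots> \<le> (\<integral>\<^sup>+s'. of_nat (c * (m - level s)) \<partial>K s)"
  proof (rule nn_integral_mono_AE, unfold AE_measure_pmf_iff, intro ballI)
    fix s' assume "s' \<in> set_pmf (K s)"
    with invariant[OF Q nT this] below[OF Q nT]
    have "c * (m - level s') + c * of_bool (s' \<in> ?up) \<le> c * (m - level s)"
      by (auto simp flip: add_mult_distrib2 intro!: mult_le_mono2)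
    then have "(of_nat (c * (m - level s') + c * of_bool (s' \<in> ?up)) :: ennreal) \<le>
        of_nat (c * (m - level s))"
      by (rule of_nat_mono)
    then show "of_nat (c * (m - level s')) + of_nat c * indicator ?up s' \<le>
        (of_nat (c * (m - level s)) :: ennreal)"
      by (simp add: indicator_def)
  qed
  also have "\<dots> = of_nat (c * (m - level s))"
    by (simp add: measure_pmf.emeasure_space_1)
  finally show "(\<integral>\<^sup>+s'. of_nat (c * (m - level s')) \<partial>K s) + 1 \<le>
      of_nat (c * (m - level s))" .
qed (use X_Suc init invariant in auto)

section \<open>Leading ones and trailing zeros\<close>

lemma LO_le_length: "LO x \<le> length x"
  unfolding LO_def by (rule length_takeWhile_le)

lemma nth_less_LO: "j < LO x \<Longrightarrow> x ! j"
  unfolding LO_def by (metis nth_mem set_takeWhileD takeWhile_nth)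

lemma not_nth_LO: "LO x < length x \<Longrightarrow> \<not> x ! LO x"
  unfolding LO_def by (rule nth_length_takeWhile)

lemma LO_geI: "k \<le> length x \<Longrightarrow> (\<And>j. j < k \<Longrightarrow> x ! j) \<Longrightarrow> k \<le> LO x"
  by (metis not_nth_LO not_le order_less_le_trans)

lemma LO_eqI:
  assumes "k \<le> length x" "\<And>j. j < k \<Longrightarrow> x ! j" "k < length x \<Longrightarrow> \<not> x ! k"
  shows "LO x = k"
  using LO_geI[of k x] nth_less_LO[of k x] LO_le_length[of x] assms
  by (cases "k < length x") (auto simp: le_less)

(* Trailing zeros are the leading ones of the complemented reversal; the facts about TZ
   below are transported from those about LO along this duality. *)
lemma TZ_eq_LO_dual: "TZ x = LO (map Not (rev x))"
  unfolding TZ_def LO_def by (simp add: takeWhile_map comp_def)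

lemma dual_flip:
  "i < length x \<Longrightarrow> map Not (rev (flip x i)) = flip (map Not (rev x)) (length x - 1 - i)"
  by (rule nth_equalityI) (auto simp: flip_def rev_nth nth_list_update)

lemma TZ_le_length: "TZ x \<le> length x"
  using LO_le_length[of "map Not (rev x)"] by (simp add: TZ_eq_LO_dual)

lemma not_nth_less_TZ: "j < TZ x \<Longrightarrow> \<not> x ! (length x - 1 - j)"
  using nth_less_LO[of j "map Not (rev x)"] TZ_le_length[of x]
  by (simp add: TZ_eq_LO_dual rev_nth)

lemma LO_TZ_le_length: "LO x + TZ x \<le> length x"
proof (rule ccontr)
  assume "\<not> ?thesis"
  \<comment> \<open>then position length x - TZ x is both a leading one and a trailing zero\<close>
  then have "length x - TZ x < LO x" "length x - 1 - (TZ x - 1) = length x - TZ x" "TZ x - 1 < TZ x"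
    using LO_le_length[of x] TZ_le_length[of x] by linarith+
  then show False
    using nth_less_LO not_nth_less_TZ by metis
qed

lemma length_flip [simp]: "length (flip x i) = length x"
  by (simp add: flip_def)

lemma LO_flip_below: "i < LO x \<Longrightarrow> LO (flip x i) = i"
  using LO_le_length[of x] by (intro LO_eqI) (auto simp: flip_def nth_list_update nth_less_LO)

lemma LO_flip_above: "LO x < i \<Longrightarrow> LO (flip x i) = LO x"
  using LO_le_length[of x] by (intro LO_eqI) (auto simp: flip_def nth_list_update nth_less_LO not_nth_LO)

lemma LO_flip_at: "LO x < length x \<Longrightarrow> LO x < LO (flip x (LO x))"
proof -
  assume "LO x < length x"
  then have "Suc (LO x) \<le> LO (flip x (LO x))"
    by (intro LO_geI) (auto simp: flip_def nth_list_update nth_less_LO not_nth_LO less_Suc_eq)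
  then show ?thesis by simp
qed

lemma TZ_flip_below:
  assumes "i < length x" "length x - 1 - i < TZ x"
  shows "TZ (flip x i) = length x - 1 - i"
  using assms LO_flip_below[of "length x - 1 - i" "map Not (rev x)"]
  by (simp add: TZ_eq_LO_dual dual_flip)

lemma TZ_flip_above:
  assumes "TZ x < length x - 1 - i"
  shows "TZ (flip x i) = TZ x"
  using assms LO_flip_above[of "map Not (rev x)" "length x - 1 - i"]
  by (simp add: TZ_eq_LO_dual dual_flip)

lemma TZ_flip_at:
  assumes "TZ x < length x"
  shows "TZ x < TZ (flip x (length x - 1 - TZ x))"
  using assms LO_flip_at[of "map Not (rev x)"]
  by (simp add: TZ_eq_LO_dual dual_flip)

lemma LO_flip_ge: "LO x \<le> i \<Longrightarrow> i < length x \<Longrightarrow> LO x \<le> LO (flip x i)"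
  using LO_flip_at[of x] LO_flip_above[of x i] by (cases "i = LO x") auto

lemma TZ_flip_ge:
  assumes "i < length x - TZ x"
  shows "TZ x \<le> TZ (flip x i)"
proof (cases "i = length x - 1 - TZ x")
  case True
  moreover have "TZ x < length x"
    using assms by linarith
  ultimately show ?thesis
    using TZ_flip_at[of x] by simp
next
  case False
  with assms show ?thesis using TZ_flip_above[of x i] by simp
qed

definition pareto_point :: "nat \<Rightarrow> nat \<Rightarrow> bits" where
  "pareto_point n i = replicate i True @ replicate (n - i) False"

lemma length_pareto_point [simp]: "i \<le> n \<Longrightarrow> length (pareto_point n i) = n"
  by (simp add: pareto_point_def)

lemma nth_pareto_point: "i \<le> n \<Longrightarrow> j < n \<Longrightarrow> pareto_point n i ! j \<longleftrightarrow> j < i"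
  by (simp add: pareto_point_def nth_append)

lemma LO_pareto_point [simp]: "i \<le> n \<Longrightarrow> LO (pareto_point n i) = i"
  by (rule LO_eqI) (auto simp: nth_pareto_point)

lemma dual_pareto_point: "i \<le> n \<Longrightarrow> map Not (rev (pareto_point n i)) = pareto_point n (n - i)"
  by (simp add: pareto_point_def)

lemma TZ_pareto_point [simp]: "i \<le> n \<Longrightarrow> TZ (pareto_point n i) = n - i"
  by (simp add: TZ_eq_LO_dual dual_pareto_point)

lemma pareto_point_eq_iff: "i \<le> n \<Longrightarrow> j \<le> n \<Longrightarrow> pareto_point n i = pareto_point n j \<longleftrightarrow> i = j"
  by (metis LO_pareto_point)

lemma pareto_set_eq: "pareto_set n = pareto_point n ` {..n}"
  by (auto simp: pareto_set_def pareto_point_def)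

lemma eq_pareto_pointI:
  assumes "length x = n" "LO x + TZ x = n"
  shows "x = pareto_point n (LO x)"
proof (rule nth_equalityI)
  show "length x = length (pareto_point n (LO x))"
    using assms by simp
  fix j assume "j < length x"
  then show "x ! j = pareto_point n (LO x) ! j"
    using assms nth_less_LO[of j x] not_nth_less_TZ[of "n - 1 - j" x]
    by (cases "j < LO x") (auto simp: nth_pareto_point)
qed

lemma flip_pareto_point_up: "j < n \<Longrightarrow> flip (pareto_point n j) j = pareto_point n (Suc j)"
  by (rule nth_equalityI) (auto simp: flip_def nth_list_update nth_pareto_point)

lemma flip_pareto_point_down:
  "0 < j \<Longrightarrow> j \<le> n \<Longrightarrow> flip (pareto_point n j) (j - 1) = pareto_point n (j - 1)"
  by (rule nth_equalityI) (auto simp: flip_def nth_list_update nth_pareto_point)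

lemma weakly_dominates_iff: "weakly_dominates y x \<longleftrightarrow> LO x \<le> LO y \<and> TZ x \<le> TZ y"
  by (simp add: weakly_dominates_def f1_def f2_def)

lemma dominates_iff:
  "dominates y x \<longleftrightarrow> LO x \<le> LO y \<and> TZ x \<le> TZ y \<and> (LO x < LO y \<or> TZ x < TZ y)"
  by (simp add: dominates_def weakly_dominates_iff f1_def f2_def)

lemma flip_not_pareto_cases:
  assumes "length x = n" "LO x + TZ x < n" "i < n"
  shows "weakly_dominates (flip x i) x \<or> dominates x (flip x i)"
proof -
  consider "i < LO x" | "LO x \<le> i" "i < n - TZ x" | "n - TZ x \<le> i" by linarith
  then show ?thesis
  proof cases
    case 1
    then show ?thesis
      using assms LO_flip_below[of i x] TZ_flip_above[of x i] by (simp add: dominates_iff)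
  next
    case 2
    then show ?thesis
      using assms LO_flip_ge[of x i] TZ_flip_ge[of i x] by (simp add: weakly_dominates_iff)
  next
    case 3
    then have "LO x < i" "n - 1 - i < TZ x"
      using assms by linarith+
    then show ?thesis
      using assms LO_flip_above[of x i] TZ_flip_below[of i x] by (simp add: dominates_iff)
  qed
qed

lemma flip_LO_not_pareto:
  assumes "length x = n" "LO x + TZ x < n"
  shows "weakly_dominates (flip x (LO x)) x \<and> LO x + TZ x < LO (flip x (LO x)) + TZ (flip x (LO x))"
proof -
  have "LO x < n - TZ x"
    using assms(2) by linarith
  then show ?thesis
    using assms LO_flip_at[of x] TZ_flip_ge[of "LO x" x] by (simp add: weakly_dominates_iff)
qed

lemma flip_pareto_point_cases:
  assumes "j \<le> n" "i < n"
  obtains "dominates (pareto_point n j) (flip (pareto_point n j) i)"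
    | "i = j" "j < n" "flip (pareto_point n j) i = pareto_point n (Suc j)"
    | "Suc i = j" "flip (pareto_point n j) i = pareto_point n i"
proof -
  consider "Suc i < j" | "Suc i = j" | "i = j" | "j < i" by linarith
  then show thesis
  proof cases
    case 1
    then have "dominates (pareto_point n j) (flip (pareto_point n j) i)"
      using assms LO_flip_below[of i "pareto_point n j"] TZ_flip_above[of "pareto_point n j" i]
      by (simp add: dominates_iff)
    then show thesis by (rule that(1))
  next
    case 2
    then have "flip (pareto_point n j) i = pareto_point n i"
      using assms flip_pareto_point_down[of j n] by auto
    with 2 show thesis by (rule that(3))
  next
    case 3
    then show thesis using assms flip_pareto_point_up[of j n] that(2) by simp
  next
    case 4
    then have "n - 1 - i < n - j"
      using assms by linarith
    with 4 have "dominates (pareto_point n j) (flip (pareto_point n j) i)"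
      using assms LO_flip_above[of "pareto_point n j" i] TZ_flip_below[of i "pareto_point n j"]
      by (simp add: dominates_iff)
    then show thesis by (rule that(1))
  qed
qed

lemma update_dominated: "z \<in> P \<Longrightarrow> dominates z y \<Longrightarrow> update P y = P"
  by (auto simp: update_def)

lemma update_singleton: "weakly_dominates y x \<Longrightarrow> update {x} y = {y}"
  by (auto simp: update_def dominates_iff weakly_dominates_iff)

lemma update_pareto_point:
  assumes "P \<subseteq> pareto_set n" "j \<le> n"
  shows "update P (pareto_point n j) = insert (pareto_point n j) P"
proof -
  have "\<not> dominates z (pareto_point n j)" if "z \<in> P" for z
    using that assms by (auto simp: pareto_set_eq dominates_iff)
  moreover have "y = pareto_point n j"
    if y: "y \<in> P" and wd: "weakly_dominates (pareto_point n j) y" for y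
  proof -
    obtain k where k: "k \<le> n" "y = pareto_point n k"
      using y assms(1) by (auto simp: pareto_set_eq)
    with wd assms(2) have "k \<le> j" "n - k \<le> n - j"
      by (simp_all add: weakly_dominates_iff)
    with assms(2) have "k = j"
      by linarith
    with k show ?thesis
      by simp
  qed
  ultimately show ?thesis
    unfolding update_def by auto
qed

section \<open>The shape of SEMO populations\<close>

definition pareto_segment :: "nat \<Rightarrow> nat \<Rightarrow> nat \<Rightarrow> popn" where
  "pareto_segment n a b = pareto_point n ` {a..b}"

lemma finite_pareto_segment [simp]: "finite (pareto_segment n a b)"
  by (simp add: pareto_segment_def)

lemma pareto_segment_subset: "b \<le> n \<Longrightarrow> pareto_segment n a b \<subseteq> pareto_set n"
  by (auto simp: pareto_segment_def pareto_set_eq)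

lemma pareto_segment_singleton: "pareto_segment n a a = {pareto_point n a}"
  by (simp add: pareto_segment_def)

lemma card_pareto_segment: "b \<le> n \<Longrightarrow> card (pareto_segment n a b) = Suc b - a"
  unfolding pareto_segment_def
  by (subst card_image) (auto simp: inj_on_def pareto_point_eq_iff)

lemma front_found_pareto_segment: "front_found n (pareto_segment n 0 n)"
  by (simp add: front_found_def pareto_front_def pareto_segment_def pareto_set_eq atLeast0AtMost)

lemma update_pareto_segment:
  assumes "a \<le> b" "b \<le> n" "k \<le> n" "a \<le> Suc k" "k \<le> Suc b"
  shows "update (pareto_segment n a b) (pareto_point n k) = pareto_segment n (min a k) (max b k)"
proof -
  have "update (pareto_segment n a b) (pareto_point n k) = insert (pareto_point n k) (pareto_segment n a b)"
    using assms by (intro update_pareto_point pareto_segment_subset)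
  moreover have "insert k {a..b} = {min a k..max b k}"
    using assms by auto
  ultimately show ?thesis
    unfolding pareto_segment_def by (metis image_insert)
qed

lemma extend_pareto_segment_up:
  "a \<le> b \<Longrightarrow> b < n \<Longrightarrow>
    update (pareto_segment n a b) (flip (pareto_point n b) b) = pareto_segment n a (Suc b)"
  using update_pareto_segment[of a b n "Suc b"] by (simp add: flip_pareto_point_up)

lemma extend_pareto_segment_down:
  "0 < a \<Longrightarrow> a \<le> b \<Longrightarrow> b \<le> n \<Longrightarrow>
    update (pareto_segment n a b) (flip (pareto_point n a) (a - 1)) = pareto_segment n (a - 1) b"
  using update_pareto_segment[of a b n "a - 1"] flip_pareto_point_down[of a n] by simp

definition semo_invariant :: "nat \<Rightarrow> popn \<Rightarrow> bool" where
  "semo_invariant n P \<longleftrightarrow>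
     (\<exists>x. P = {x} \<and> length x = n \<and> LO x + TZ x < n) \<or>
     (\<exists>a b. a \<le> b \<and> b \<le> n \<and> P = pareto_segment n a b)"

definition potential :: "popn \<Rightarrow> nat" where
  "potential P = Max ((\<lambda>x. LO x + TZ x) ` P) + card P"

lemma semo_invariant_pareto_segment:
  "a \<le> b \<Longrightarrow> b \<le> n \<Longrightarrow> semo_invariant n (pareto_segment n a b)"
  unfolding semo_invariant_def by blast

lemma potential_singleton [simp]: "potential {x} = LO x + TZ x + 1"
  by (simp add: potential_def)

lemma potential_pareto_segment:
  assumes "a \<le> b" "b \<le> n"
  shows "potential (pareto_segment n a b) = n + (Suc b - a)"
proof -
  have "(\<lambda>x. LO x + TZ x) ` pareto_segment n a b = {n}"
    using assms by (force simp: pareto_segment_def image_image)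
  with assms show ?thesis
    by (simp add: potential_def card_pareto_segment)
qed

lemma semo_invariant_singleton: "length x = n \<Longrightarrow> semo_invariant n {x}"
proof (cases "LO x + TZ x < n")
  case False
  assume "length x = n"
  with False have "x = pareto_point n (LO x)" "LO x \<le> n"
    using LO_TZ_le_length[of x] eq_pareto_pointI[of x n] by auto
  then show ?thesis
    using semo_invariant_pareto_segment[of "LO x" "LO x" n] by (simp add: pareto_segment_singleton)
qed (auto simp: semo_invariant_def)

lemma semo_invariant_update_singleton:
  assumes "length x = n" "LO x + TZ x < n" "i < n"
  shows "semo_invariant n (update {x} (flip x i)) \<and> potential {x} \<le> potential (update {x} (flip x i))"
  using flip_not_pareto_cases[OF assms]
proof
  assume "weakly_dominates (flip x i) x"
  then show ?thesis
    using assms semo_invariant_singleton[of "flip x i" n]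
    by (simp add: update_singleton weakly_dominates_iff)
next
  assume "dominates x (flip x i)"
  then show ?thesis
    using assms by (simp add: update_dominated semo_invariant_def)
qed

lemma semo_invariant_update_pareto_segment:
  assumes "a \<le> b" "b \<le> n" "x \<in> pareto_segment n a b" "i < n"
  shows "semo_invariant n (update (pareto_segment n a b) (flip x i)) \<and>
    potential (pareto_segment n a b) \<le> potential (update (pareto_segment n a b) (flip x i))"
proof -
  obtain j where j: "a \<le> j" "j \<le> b" "x = pareto_point n j"
    using assms(3) by (auto simp: pareto_segment_def)
  have extended: "semo_invariant n (pareto_segment n (min a k) (max b k)) \<and>
      potential (pareto_segment n a b) \<le> potential (pareto_segment n (min a k) (max b k))"
    if "k \<le> n" for k
    using assms that by (simp add: semo_invariant_pareto_segment potential_pareto_segment)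
  from j assms(2) have "j \<le> n"
    by simp
  then show ?thesis
  proof (rule flip_pareto_point_cases[OF _ assms(4)])
    assume "dominates (pareto_point n j) (flip (pareto_point n j) i)"
    then have "update (pareto_segment n a b) (flip x i) = pareto_segment n a b"
      using j(3) assms(3) by (simp add: update_dominated)
    with assms(1,2) show ?thesis
      by (simp add: semo_invariant_pareto_segment)
  next
    assume "i = j" "j < n" "flip (pareto_point n j) i = pareto_point n (Suc j)"
    then have "update (pareto_segment n a b) (flip x i) = pareto_segment n (min a (Suc j)) (max b (Suc j))"
      using j assms(1,2) by (simp add: update_pareto_segment)
    with \<open>j < n\<close> show ?thesis
      using extended[of "Suc j"] by simp
  next
    assume "Suc i = j" "flip (pareto_point n j) i = pareto_point n i"
    then have "update (pareto_segment n a b) (flip x i) = pareto_segment n (min a i) (max b i)"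
      using j assms(1,2) by (simp add: update_pareto_segment)
    with assms(4) show ?thesis
      using extended[of i] by simp
  qed
qed

lemma semo_invariant_update:
  assumes "semo_invariant n P" "x \<in> P" "i < n"
  shows "semo_invariant n (update P (flip x i)) \<and> potential P \<le> potential (update P (flip x i))"
proof -
  from assms(1) consider (single) z where "P = {z}" "length z = n" "LO z + TZ z < n"
    | (segment) a b where "a \<le> b" "b \<le> n" "P = pareto_segment n a b"
    unfolding semo_invariant_def by blast
  then show ?thesis
  proof cases
    case single
    with assms(2,3) show ?thesis
      using semo_invariant_update_singleton by simp
  next
    case segment
    with assms(2,3) show ?thesis
      using semo_invariant_update_pareto_segment by simp
  qed
qed

lemma semo_invariant_finite_nonempty: "semo_invariant n P \<Longrightarrow> finite P \<and> P \<noteq> {}"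
  by (auto simp: semo_invariant_def pareto_segment_def)

lemma potential_le_if_not_found:
  assumes "semo_invariant n P" "\<not> front_found n P"
  shows "potential P \<le> 2 * n"
  using assms(1) unfolding semo_invariant_def
proof (elim disjE exE conjE)
  fix a b assume "a \<le> b" "b \<le> n" "P = pareto_segment n a b"
  moreover from this assms(2) have "\<not> (a = 0 \<and> b = n)"
    using front_found_pareto_segment[of n] by auto
  ultimately show ?thesis
    by (auto simp: potential_pareto_segment)
qed auto

section \<open>Diversity scores on segments of the Pareto front\<close>

definition most_diverse :: "(popn \<Rightarrow> bits \<Rightarrow> ereal) \<Rightarrow> popn \<Rightarrow> popn" where
  "most_diverse d P = {x \<in> P. \<forall>y \<in> P. d P y \<le> d P x}"

lemma hdc_select_eq: "hdc_select d P = pmf_of_set (most_diverse d P)"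
  by (simp add: hdc_select_def most_diverse_def)

lemma most_diverse_subset: "most_diverse d P \<subseteq> P"
  by (auto simp: most_diverse_def)

lemma most_diverse_ge:
  "x \<in> most_diverse d P \<Longrightarrow> y \<in> P \<Longrightarrow> d P x \<le> d P y \<Longrightarrow> y \<in> most_diverse d P"
  by (auto simp: most_diverse_def intro: order_trans)

lemma finite_most_diverse: "finite P \<Longrightarrow> finite (most_diverse d P)"
  using most_diverse_subset finite_subset by blast

lemma most_diverse_nonempty:
  assumes "finite P" "P \<noteq> {}"
  shows "most_diverse d P \<noteq> {}"
proof -
  have "Max (d P ` P) \<in> d P ` P"
    using assms by simp
  then obtain x where "x \<in> P" "d P x = Max (d P ` P)"
    by auto
  with assms(1) have "x \<in> most_diverse d P"
    by (simp add: most_diverse_def)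
  then show ?thesis
    by blast
qed

lemma most_diverse_singleton [simp]: "most_diverse d {x} = {x}"
  by (auto simp: most_diverse_def)

lemma sorted_by_eqI:
  assumes "distinct xs" "inj_on g (set xs)" "sorted (map g xs)"
  shows "sorted_by g (set xs) = xs"
  unfolding sorted_by_def
  using assms by (intro sort_key_inj_key_eq) (simp_all add: set_eq_iff_mset_eq_distinct[symmetric])

lemma pos_nth: "distinct xs \<Longrightarrow> i < length xs \<Longrightarrow> pos xs (xs ! i) = i"
  unfolding pos_def by (rule Least_equality) (auto simp: nth_eq_iff_index_eq)

definition pareto_segment_list :: "nat \<Rightarrow> nat \<Rightarrow> nat \<Rightarrow> bits list" where
  "pareto_segment_list n a b = map (pareto_point n) [a..<Suc b]"

lemma set_pareto_segment_list: "set (pareto_segment_list n a b) = pareto_segment n a b"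
  by (simp add: pareto_segment_list_def pareto_segment_def atLeastLessThanSuc_atLeastAtMost del: upt_Suc)

lemma distinct_pareto_segment_list: "b \<le> n \<Longrightarrow> distinct (pareto_segment_list n a b)"
  by (simp add: pareto_segment_list_def distinct_map inj_on_def pareto_point_eq_iff del: upt_Suc)

lemma length_pareto_segment_list: "length (pareto_segment_list n a b) = Suc b - a"
  by (simp add: pareto_segment_list_def del: upt_Suc)

lemma nth_pareto_segment_list:
  "i < Suc b - a \<Longrightarrow> pareto_segment_list n a b ! i = pareto_point n (a + i)"
  by (simp add: pareto_segment_list_def del: upt_Suc)

lemma sorted_by_f1_pareto_segment:
  assumes "b \<le> n"
  shows "sorted_by f1 (pareto_segment n a b) = pareto_segment_list n a b"
proof -
  have "map f1 (pareto_segment_list n a b) = map real [a..<Suc b]"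
    using assms by (simp add: pareto_segment_list_def f1_def del: upt_Suc)
  then have "sorted (map f1 (pareto_segment_list n a b))"
    by (simp add: sorted_map del: upt_Suc)
  moreover have "inj_on f1 (pareto_segment n a b)"
    using assms by (auto simp: inj_on_def pareto_segment_def f1_def)
  ultimately show ?thesis
    using sorted_by_eqI[of "pareto_segment_list n a b" f1] assms
    by (simp add: distinct_pareto_segment_list set_pareto_segment_list)
qed

lemma sorted_by_f2_pareto_segment:
  assumes "b \<le> n"
  shows "sorted_by f2 (pareto_segment n a b) = rev (pareto_segment_list n a b)"
proof -
  have "map f2 (rev (pareto_segment_list n a b)) = rev (map (\<lambda>i. real (n - i)) [a..<Suc b])"
    using assms by (simp add: pareto_segment_list_def f2_def rev_map del: upt_Suc)
  then have "sorted (map f2 (rev (pareto_segment_list n a b)))"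
    by (simp add: sorted_wrt_rev sorted_wrt_map del: upt_Suc)
       (rule sorted_wrt_mono_rel[OF _ sorted_wrt_upt], auto)
  moreover have "inj_on f2 (pareto_segment n a b)"
    using assms by (auto simp: inj_on_def pareto_segment_def f2_def) (metis diff_diff_cancel le_trans)
  ultimately show ?thesis
    using sorted_by_eqI[of "rev (pareto_segment_list n a b)" f2] assms
    by (simp add: distinct_pareto_segment_list set_pareto_segment_list)
qed

lemma pos_pareto_segment_list:
  assumes "a \<le> j" "j \<le> b" "b \<le> n"
  shows "pos (pareto_segment_list n a b) (pareto_point n j) = j - a"
  using assms pos_nth[of "pareto_segment_list n a b" "j - a"]
  by (simp add: distinct_pareto_segment_list length_pareto_segment_list nth_pareto_segment_list)

lemma pos_rev_pareto_segment_list: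
  assumes "a \<le> j" "j \<le> b" "b \<le> n"
  shows "pos (rev (pareto_segment_list n a b)) (pareto_point n j) = b - j"
  using assms pos_nth[of "rev (pareto_segment_list n a b)" "b - j"]
  by (simp add: distinct_pareto_segment_list length_pareto_segment_list nth_pareto_segment_list
      rev_nth Suc_diff_le)

lemma CD_obj_f1_pareto_segment_eq_PInf:
  "a \<le> j \<Longrightarrow> j \<le> b \<Longrightarrow> b \<le> n \<Longrightarrow>
    CD_obj f1 (pareto_segment n a b) (pareto_point n j) = \<infinity> \<longleftrightarrow> j = a \<or> j = b"
  by (auto simp: CD_obj_def Let_def sorted_by_f1_pareto_segment pos_pareto_segment_list
      length_pareto_segment_list)

lemma CD_obj_f2_pareto_segment_eq_PInf:
  "a \<le> j \<Longrightarrow> j \<le> b \<Longrightarrow> b \<le> n \<Longrightarrow>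
    CD_obj f2 (pareto_segment n a b) (pareto_point n j) = \<infinity> \<longleftrightarrow> j = a \<or> j = b"
  by (auto simp: CD_obj_def Let_def sorted_by_f2_pareto_segment pos_rev_pareto_segment_list
      length_pareto_segment_list)

lemma CDC_pareto_segment_eq_PInf:
  "a \<le> j \<Longrightarrow> j \<le> b \<Longrightarrow> b \<le> n \<Longrightarrow>
    CDC (pareto_segment n a b) (pareto_point n j) = \<infinity> \<longleftrightarrow> j = a \<or> j = b"
  by (simp add: CDC_def CD_obj_f1_pareto_segment_eq_PInf CD_obj_f2_pareto_segment_eq_PInf)

lemma HVC_pareto_segment:
  assumes "a \<le> j" "j \<le> b" "b \<le> n"
  shows "HVC r1 r2 (pareto_segment n a b) (pareto_point n j) =
    ereal ((real j - (if j = a then r1 else real j - 1)) *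
           (real (n - j) - (if j = b then r2 else real (n - j) - 1)))"
proof -
  have "f1 (pareto_segment_list n a b ! (j - a - 1)) = real j - 1" if "j \<noteq> a"
    using assms that by (simp add: nth_pareto_segment_list f1_def)
  moreover have "f2 (pareto_segment_list n a b ! (j - a + 1)) = real (n - j) - 1" if "j \<noteq> b"
    using assms that by (simp add: nth_pareto_segment_list f2_def)
  ultimately show ?thesis
    using assms
    by (auto simp: HVC_def Let_def sorted_by_f1_pareto_segment pos_pareto_segment_list
        length_pareto_segment_list f1_def f2_def)
qed

(* An end of the segment is extendable unless it is an extreme point of the front
   (a = 0 or b = n). *)
definition prefers_extendable_ends :: "(popn \<Rightarrow> bits \<Rightarrow> ereal) \<Rightarrow> bool" where
  "prefers_extendable_ends d \<longleftrightarrow>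
     (\<forall>n a b. a < b \<longrightarrow> b \<le> n \<longrightarrow> \<not> (a = 0 \<and> b = n) \<longrightarrow>
       (let P = pareto_segment n a b; da = d P (pareto_point n a); db = d P (pareto_point n b) in
         (\<forall>j. a < j \<longrightarrow> j < b \<longrightarrow> d P (pareto_point n j) < max da db) \<and>
         (a = 0 \<longrightarrow> da \<le> db) \<and> (b = n \<longrightarrow> db \<le> da)))"

lemma prefers_extendable_endsD:
  assumes "prefers_extendable_ends d" "a < b" "b \<le> n" "\<not> (a = 0 \<and> b = n)"
  defines "P \<equiv> pareto_segment n a b"
  shows "a < j \<Longrightarrow> j < b \<Longrightarrow>
      d P (pareto_point n j) < max (d P (pareto_point n a)) (d P (pareto_point n b))"
    and "a = 0 \<Longrightarrow> d P (pareto_point n a) \<le> d P (pareto_point n b)"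
    and "b = n \<Longrightarrow> d P (pareto_point n b) \<le> d P (pareto_point n a)"
  using assms unfolding prefers_extendable_ends_def Let_def by blast+

lemma most_diverse_pareto_segment_subset:
  assumes d: "prefers_extendable_ends d" and ab: "a < b" "b \<le> n" "\<not> (a = 0 \<and> b = n)"
  shows "most_diverse d (pareto_segment n a b) \<subseteq> {pareto_point n a, pareto_point n b}"
proof
  let ?P = "pareto_segment n a b"
  fix x assume x: "x \<in> most_diverse d ?P"
  then obtain j where j: "a \<le> j" "j \<le> b" "x = pareto_point n j"
    using most_diverse_subset by (force simp: pareto_segment_def)
  have "\<not> (a < j \<and> j < b)"
  proof
    assume "a < j \<and> j < b"
    then have "d ?P x < max (d ?P (pareto_point n a)) (d ?P (pareto_point n b))"
      using prefers_extendable_endsD(1)[OF d ab] j(3) by blast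
    moreover have "d ?P (pareto_point n a) \<le> d ?P x" "d ?P (pareto_point n b) \<le> d ?P x"
      using x ab by (auto simp: most_diverse_def pareto_segment_def)
    ultimately show False
      by (simp add: not_le[symmetric])
  qed
  with j show "x \<in> {pareto_point n a, pareto_point n b}"
    by (auto simp: le_less)
qed

lemma card_most_diverse_pareto_segment:
  assumes d: "prefers_extendable_ends d" and ab: "a \<le> b" "b \<le> n" "\<not> (a = 0 \<and> b = n)"
  shows "card (most_diverse d (pareto_segment n a b)) \<le> 2"
proof (cases "a = b")
  case False
  with ab have "card (most_diverse d (pareto_segment n a b)) \<le> card {pareto_point n a, pareto_point n b}"
    using most_diverse_pareto_segment_subset[OF d] by (intro card_mono) auto
  also have "\<dots> \<le> 2"
    by (simp add: card_insert_if)
  finally show ?thesis .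
qed (simp add: pareto_segment_singleton)

lemma extendable_end_most_diverse:
  assumes d: "prefers_extendable_ends d" and ab: "a \<le> b" "b \<le> n" "\<not> (a = 0 \<and> b = n)"
  defines "P \<equiv> pareto_segment n a b"
  shows "0 < a \<and> pareto_point n a \<in> most_diverse d P \<or>
    b < n \<and> pareto_point n b \<in> most_diverse d P"
proof (cases "a = b")
  case True
  with ab show ?thesis
    by (auto simp: P_def pareto_segment_singleton)
next
  case False
  with ab have "a < b"
    by simp
  have ends: "pareto_point n a \<in> P" "pareto_point n b \<in> P"
    using ab by (auto simp: P_def pareto_segment_def)
  obtain x where x: "x \<in> most_diverse d P"
    using most_diverse_nonempty[of P d] ends by (auto simp: P_def)
  with most_diverse_pareto_segment_subset[OF d \<open>a < b\<close> ab(2,3)]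
  have x_end: "x = pareto_point n a \<or> x = pareto_point n b"
    by (auto simp: P_def)
  consider "a = 0" | "b = n" | "0 < a" "b < n"
    using ab by linarith
  then show ?thesis
  proof cases
    case 1
    then have "d P x \<le> d P (pareto_point n b)"
      using x_end prefers_extendable_endsD(2)[OF d \<open>a < b\<close> ab(2,3)] by (auto simp: P_def)
    with 1 ab x ends show ?thesis
      using most_diverse_ge by auto
  next
    case 2
    then have "d P x \<le> d P (pareto_point n a)"
      using x_end prefers_extendable_endsD(3)[OF d \<open>a < b\<close> ab(2,3)] by (auto simp: P_def)
    with 2 ab x ends show ?thesis
      using most_diverse_ge by auto
  next
    case 3
    with x x_end show ?thesis
      by blast
  qed
qed

lemma prefers_extendable_ends_CDC: "prefers_extendable_ends CDC"
  unfolding prefers_extendable_ends_def Let_def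
proof (intro allI impI)
  fix n a b :: nat
  assume ab: "a < b" "b \<le> n"
  let ?cdc = "CDC (pareto_segment n a b)"
  have ends: "?cdc (pareto_point n a) = \<infinity>" "?cdc (pareto_point n b) = \<infinity>"
    using ab by (simp_all add: CDC_pareto_segment_eq_PInf)
  have "?cdc (pareto_point n j) \<noteq> \<infinity>" if "a < j" "j < b" for j
    using ab that by (simp add: CDC_pareto_segment_eq_PInf)
  with ends show "(\<forall>j. a < j \<longrightarrow> j < b \<longrightarrow> ?cdc (pareto_point n j)
      < max (?cdc (pareto_point n a)) (?cdc (pareto_point n b))) \<and>
    (a = 0 \<longrightarrow> ?cdc (pareto_point n a) \<le> ?cdc (pareto_point n b)) \<and>
    (b = n \<longrightarrow> ?cdc (pareto_point n b) \<le> ?cdc (pareto_point n a))"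
    by (auto simp: less_top[symmetric])
qed

lemma prefers_extendable_ends_HVC:
  assumes "0 < r"
  shows "prefers_extendable_ends (HVC (-r) (-r))"
  unfolding prefers_extendable_ends_def Let_def
proof (intro allI impI)
  fix n a b :: nat
  assume ab: "a < b" "b \<le> n" "\<not> (a = 0 \<and> b = n)"
  let ?hvc = "HVC (-r) (-r) (pareto_segment n a b)"
  have left: "?hvc (pareto_point n a) = ereal (real a + r)"
    and right: "?hvc (pareto_point n b) = ereal (real (n - b) + r)"
    using ab by (simp_all add: HVC_pareto_segment)
  have interior: "?hvc (pareto_point n j) = ereal 1" if "a < j" "j < b" for j
    using ab that by (simp add: HVC_pareto_segment)
  have "1 < max (real a + r) (real (n - b) + r)"
    using ab assms by linarith
  then have "ereal 1 < max (ereal (real a + r)) (ereal (real (n - b) + r))"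
    by (auto simp: max_def)
  with left right interior assms show "(\<forall>j. a < j \<longrightarrow> j < b \<longrightarrow> ?hvc (pareto_point n j)
      < max (?hvc (pareto_point n a)) (?hvc (pareto_point n b))) \<and>
    (a = 0 \<longrightarrow> ?hvc (pareto_point n a) \<le> ?hvc (pareto_point n b)) \<and>
    (b = n \<longrightarrow> ?hvc (pareto_point n b) \<le> ?hvc (pareto_point n a))"
    by auto
qed

section \<open>Expected optimisation time\<close>

lemma semo_step_eq_map_pair:
  "semo_step d n P =
     map_pmf (\<lambda>(x, i). update P (flip x i)) (pair_pmf (hdc_select d P) (pmf_of_set {..<n}))"
  by (simp add: semo_step_def mutate_def pair_pmf_def map_pmf_def bind_assoc_pmf bind_return_pmf)

lemma set_pmf_semo_step:
  assumes "finite P" "P \<noteq> {}" "0 < n"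
  shows "set_pmf (semo_step d n P) = {update P (flip x i) | x i. x \<in> most_diverse d P \<and> i < n}"
  using assms most_diverse_nonempty[OF assms(1,2), of d] finite_most_diverse[OF assms(1), of d]
  by (auto simp: semo_step_eq_map_pair hdc_select_eq set_pmf_of_set lessThan_empty_iff)

lemma prob_semo_step_ge:
  assumes "finite P" "x \<in> most_diverse d P" "i < n" "update P (flip x i) \<in> E"
  shows "1 / (real (card (most_diverse d P)) * real n) \<le> measure_pmf.prob (semo_step d n P) E"
proof -
  have "most_diverse d P \<noteq> {}"
    using assms(2) by blast
  then have "1 / (real (card (most_diverse d P)) * real n) =
      pmf (pair_pmf (hdc_select d P) (pmf_of_set {..<n})) (x, i)"
    using assms finite_most_diverse[OF assms(1), of d]
    by (simp add: pmf_pair hdc_select_eq pmf_of_set lessThan_empty_iff)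
  also have "\<dots> \<le> measure_pmf.prob (pair_pmf (hdc_select d P) (pmf_of_set {..<n}))
      ((\<lambda>(x, i). update P (flip x i)) -` E)"
    using assms(4) by (auto simp: measure_pmf_single[symmetric] intro!: measure_pmf.finite_measure_mono)
  also have "\<dots> = measure_pmf.prob (semo_step d n P) E"
    by (simp add: semo_step_eq_map_pair)
  finally show ?thesis .
qed

lemma set_pmf_init_pop: "set_pmf (init_pop n) = {{s} | s. length s = n}"
proof -
  have "replicate n True \<in> {s. length s = n}"
    by simp
  then have "{s :: bits. length s = n} \<noteq> {}"
    by blast
  then show ?thesis
    by (auto simp: init_pop_def set_pmf_of_set finite_list_length)
qed

lemma semo_potential_increase:
  assumes d: "prefers_extendable_ends d" and inv: "semo_invariant n P" and nf: "\<not> front_found n P"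
  shows "\<exists>x \<in> most_diverse d P. \<exists>i < n. potential P < potential (update P (flip x i))"
proof -
  from inv consider (single) z where "P = {z}" "length z = n" "LO z + TZ z < n"
    | (segment) a b where "a \<le> b" "b \<le> n" "P = pareto_segment n a b"
    unfolding semo_invariant_def by blast
  then show ?thesis
  proof cases
    case single
    let ?y = "flip z (LO z)"
    have "weakly_dominates ?y z" "LO z + TZ z < LO ?y + TZ ?y"
      using flip_LO_not_pareto[OF single(2,3)] by auto
    then have "potential P < potential (update P ?y)"
      using single(1) by (simp add: update_singleton)
    moreover have "LO z < n"
      using single(3) by linarith
    ultimately show ?thesis
      using single(1) by auto
  next
    case segment
    then have "\<not> (a = 0 \<and> b = n)"
      using nf front_found_pareto_segment by auto
    with d segment consider
        "0 < a" "pareto_point n a \<in> most_diverse d P"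
      | "b < n" "pareto_point n b \<in> most_diverse d P"
      using extendable_end_most_diverse by blast
    then show ?thesis
    proof cases
      case 1
      with segment show ?thesis
        using extend_pareto_segment_down[of a b n]
        by (intro bexI[of _ "pareto_point n a"] exI[of _ "a - 1"]) (auto simp: potential_pareto_segment)
    next
      case 2
      with segment show ?thesis
        using extend_pareto_segment_up[of a b n]
        by (intro bexI[of _ "pareto_point n b"] exI[of _ b]) (auto simp: potential_pareto_segment)
    qed
  qed
qed

lemma card_most_diverse_le_2:
  assumes d: "prefers_extendable_ends d" and inv: "semo_invariant n P" and nf: "\<not> front_found n P"
  shows "card (most_diverse d P) \<le> 2"
  using inv unfolding semo_invariant_def
proof (elim disjE exE conjE)
  fix a b assume "a \<le> b" "b \<le> n" "P = pareto_segment n a b"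
  moreover from this nf have "\<not> (a = 0 \<and> b = n)"
    using front_found_pareto_segment by auto
  ultimately show ?thesis
    using card_most_diverse_pareto_segment[OF d] by simp
qed auto

lemma prob_potential_increase:
  assumes d: "prefers_extendable_ends d" and inv: "semo_invariant n P" and nf: "\<not> front_found n P"
    and n: "0 < n"
  shows "1 \<le> real (2 * n) * measure_pmf.prob (semo_step d n P) {P'. potential P < potential P'}"
proof -
  obtain x i where x: "x \<in> most_diverse d P" and i: "i < n"
    and up: "potential P < potential (update P (flip x i))"
    using semo_potential_increase[OF d inv nf] by blast
  have "0 < card (most_diverse d P)"
    using x finite_most_diverse semo_invariant_finite_nonempty[OF inv] card_gt_0_iff by blast
  with card_most_diverse_le_2[OF d inv nf] n
  have "1 / (2 * real n) \<le> 1 / (real (card (most_diverse d P)) * real n)"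
    by (intro divide_left_mono mult_right_mono) auto
  also have "\<dots> \<le> measure_pmf.prob (semo_step d n P) {P'. potential P < potential P'}"
    using semo_invariant_finite_nonempty[OF inv] x i up by (intro prob_semo_step_ge) auto
  finally show ?thesis
    using n by (simp add: field_simps)
qed

lemma semo_expected_time_le:
  assumes d: "prefers_extendable_ends d" and n: "0 < n"
  shows "semo_expected_time d n \<le> of_nat (2 * n * (2 * n + 1))"
  unfolding semo_expected_time_def
proof (rule fitness_level_hitting_time[where Q = "semo_invariant n" and level = potential])
  fix P assume "P \<in> set_pmf (semo_dist d n 0)"
  then show "semo_invariant n P"
    by (auto simp: set_pmf_init_pop semo_invariant_singleton)
next
  fix P P' assume inv: "semo_invariant n P" and "\<not> front_found n P"
    and "P' \<in> set_pmf (semo_step d n P)"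
  then obtain x i where "x \<in> most_diverse d P" "i < n" "P' = update P (flip x i)"
    using semo_invariant_finite_nonempty[OF inv] n by (auto simp: set_pmf_semo_step)
  then show "semo_invariant n P' \<and> potential P \<le> potential P'"
    using semo_invariant_update[OF inv] most_diverse_subset by blast
next
  fix P assume "semo_invariant n P" "\<not> front_found n P"
  then show "1 \<le> real (2 * n) * measure_pmf.prob (semo_step d n P) {P'. potential P < potential P'}"
    using prob_potential_increase[OF d _ _ n] by blast
next
  fix P assume "semo_invariant n P" "\<not> front_found n P"
  then show "potential P < 2 * n + 1"
    using potential_le_if_not_found by fastforce
qed simp

theorem theorem7:
  shows "(\<exists>C N. \<forall>n \<ge> N. semo_expected_time CDC n \<le> ennreal (C * (real n)^2))
       \<and> (\<forall>r::real. r \<ge> 1 \<longrightarrow>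
            (\<exists>C N. \<forall>n \<ge> N. semo_expected_time (HVC (-r) (-r)) n \<le> ennreal (C * (real n)^2)))"
proof -
  have quadratic: "\<exists>C N. \<forall>n \<ge> N. semo_expected_time d n \<le> ennreal (C * (real n)^2)"
    if "prefers_extendable_ends d" for d
  proof (intro exI allI impI)
    fix n :: nat assume "1 \<le> n"
    then have "semo_expected_time d n \<le> of_nat (2 * n * (2 * n + 1))"
      using semo_expected_time_le[OF that] by simp
    also have "\<dots> = ennreal (real (2 * n * (2 * n + 1)))"
      by (rule ennreal_of_nat_eq_real_of_nat)
    also have "\<dots> \<le> ennreal (6 * (real n)^2)"
      using \<open>1 \<le> n\<close> by (intro ennreal_leI) (simp add: power2_eq_square algebra_simps)
    finally show "semo_expected_time d n \<le> ennreal (6 * (real n)^2)" .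
  qed
  show ?thesis
    using quadratic prefers_extendable_ends_CDC prefers_extendable_ends_HVC by simp
qed

end
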